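(* Let $k$ be a field, $R=k[x_1,\ldots,x_n]$ localized at $(x_1,\ldots,x_n)$, and let $\Delta$ be a tree with vertex set $\{x_1,\ldots,x_n\}$ and facet ideal $I=\mathcal{F}(\Delta)$. Then $I$ satisfies condition $\mathcal{F}_1$, i.e. $\mu(I_p)\le\dim R_p$ for every prime ideal $p$ of $R$ with $I\subseteq p$, where $\mu$ denotes the minimal number of generators.
   Context: A simplicial complex on a vertex set $V$ is a collection of subsets of $V$ containing all singletons and closed under subsets; its facets are its maximal faces. Vertices are identified with variables. The facet ideal $\mathcal{F}(\Delta)$ is generated by $\prod_{x_j\in F}x_j$, $F$ a facet. A subcomplex of $\Delta$ is a simplicial complex whose facet set is a subset of that of $\Delta$. $\Delta$ is connected if any two facets are joined by a chain of facets with consecutive members intersecting. A facet $F$ is a leaf if either $F$ is the only facet, or there is a facet $G\neq F$ with $F\cap F'\subseteq F\cap G$ for every facet $F'\neq F$. A connected $\Delta$ is a tree if every nonempty subcomplex has a leaf. *)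

theory Defs
  imports "HOL-Library.Poly_Mapping" "HOL-Library.Extended_Nat"
begin

type_synonym ('v, 'k) mpoly = "('v \<Rightarrow>\<^sub>0 nat) \<Rightarrow>\<^sub>0 'k"

definition var :: "'v \<Rightarrow> ('v, 'k::comm_ring_1) mpoly" where
  "var v = Poly_Mapping.single (Poly_Mapping.single v 1) 1"

definition const_coeff :: "('v, 'k::comm_ring_1) mpoly \<Rightarrow> 'k" where
  "const_coeff f = Poly_Mapping.lookup f 0"

definition max_ideal :: "('v, 'k::comm_ring_1) mpoly set" where
  "max_ideal = {f. const_coeff f = 0}"

definition is_ideal :: "'a::comm_ring_1 set \<Rightarrow> bool" where
  "is_ideal J \<longleftrightarrow> 0 \<in> J \<and> (\<forall>x\<in>J. \<forall>y\<in>J. x + y \<in> J) \<and> (\<forall>r. \<forall>x\<in>J. r * x \<in> J)"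

definition gen_ideal :: "'a::comm_ring_1 set \<Rightarrow> 'a set" where
  "gen_ideal A = \<Inter>{J. is_ideal J \<and> A \<subseteq> J}"

definition is_prime_ideal :: "'a::comm_ring_1 set \<Rightarrow> bool" where
  "is_prime_ideal P \<longleftrightarrow> is_ideal P \<and> 1 \<notin> P \<and> (\<forall>a b. a * b \<in> P \<longrightarrow> a \<in> P \<or> b \<in> P)"

text \<open>Height of a prime: supremum of lengths h of strict chains of primes
  P_0 \<subset> P_1 \<subset> ... \<subset> P_h = P.  This is the Krull dimension of the localization at P.\<close>
definition height :: "'a::comm_ring_1 set \<Rightarrow> enat" where
  "height P = Sup {enat h | h. \<exists>c :: nat \<Rightarrow> 'a set.
      (\<forall>i\<le>h. is_prime_ideal (c i)) \<and> (\<forall>i<h. c i \<subset> c (Suc i)) \<and> c h = P}"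

text \<open>Minimal number of generators of the extended ideal I A_P in the localization A_P,
  written out without constructing A_P: a list gs of elements of I generates I A_P iff
  every g in I satisfies s*g in (gs) for some s outside P.  (Generators of I A_P may be
  taken in I since every element of I A_P is an element of I times a unit.)\<close>
definition mu_loc :: "'a::comm_ring_1 set \<Rightarrow> 'a set \<Rightarrow> nat" where
  "mu_loc I P = (LEAST r. \<exists>gs. length gs = r \<and> set gs \<subseteq> I \<and>
       (\<forall>g\<in>I. \<exists>s. s \<notin> P \<and> s * g \<in> gen_ideal (set gs)))"

definition is_facet_set :: "'v set set \<Rightarrow> bool" where
  "is_facet_set Fs \<longleftrightarrow> finite Fs \<and> (\<forall>F\<in>Fs. F \<noteq> {} \<and> finite F)
     \<and> (\<forall>F\<in>Fs. \<forall>G\<in>Fs. F \<subseteq> G \<longrightarrow> F = G) \<and> \<Union>Fs = UNIV"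

definition facets_connected :: "'v set set \<Rightarrow> bool" where
  "facets_connected S \<longleftrightarrow> (\<forall>F\<in>S. \<forall>G\<in>S.
      (F, G) \<in> {(A, B). A \<in> S \<and> B \<in> S \<and> A \<inter> B \<noteq> {}}\<^sup>*)"

definition is_leaf :: "'v set set \<Rightarrow> 'v set \<Rightarrow> bool" where
  "is_leaf S F \<longleftrightarrow> F \<in> S \<and> (S = {F} \<or>
      (\<exists>G\<in>S. G \<noteq> F \<and> (\<forall>F'\<in>S. F' \<noteq> F \<longrightarrow> F \<inter> F' \<subseteq> F \<inter> G)))"

definition is_tree :: "'v set set \<Rightarrow> bool" where
  "is_tree Fs \<longleftrightarrow> facets_connected Fs \<and>
      (\<forall>S. S \<subseteq> Fs \<and> S \<noteq> {} \<longrightarrow> (\<exists>F. is_leaf S F))"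

definition facet_ideal :: "'v set set \<Rightarrow> ('v, 'k::comm_ring_1) mpoly set" where
  "facet_ideal Fs = gen_ideal ((\<lambda>F. \<Prod>v\<in>F. var v) ` Fs)"

end

theory Submission
  imports Defs "HOL-Library.Countable"
begin

(* Let W be the set of vertices whose variables lie in P.  Each facet monomial lies in the prime P,
   so every facet meets W, while the product of the variables outside W does not lie in P.  Once
   these variables are inverted, the generator of a facet G becomes the monomial of its trace
   G \<inter> W, and a leaf-removal induction shows that in a forest at most |W| facets suffice for every
   trace to contain one of theirs; hence mu(I_P) \<le> |W|.  On the other hand the ideals generated
   by the variables of an increasing sequence of subsets of W are prime and form a strict chain
   of length |W| ending in P, so |W| \<le> height P. *)

lemma is_ideal_gen_ideal: "is_ideal (gen_ideal A)"
  unfolding gen_ideal_def is_ideal_def by auto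

lemma gen_ideal_superset: "A \<subseteq> gen_ideal A"
  unfolding gen_ideal_def by auto

lemma gen_ideal_least: "is_ideal J \<Longrightarrow> A \<subseteq> J \<Longrightarrow> gen_ideal A \<subseteq> J"
  unfolding gen_ideal_def by auto

lemma ideal_mult_mem: "is_ideal J \<Longrightarrow> x \<in> J \<Longrightarrow> r * x \<in> J"
  unfolding is_ideal_def by blast

lemma ideal_dvd_mem: "is_ideal J \<Longrightarrow> x \<in> J \<Longrightarrow> x dvd y \<Longrightarrow> y \<in> J"
  by (metis dvdE ideal_mult_mem mult.commute)

lemma ideal_sum_mem:
  assumes "is_ideal J" "\<And>a. a \<in> A \<Longrightarrow> f a \<in> J"
  shows "sum f A \<in> J"
proof (cases "finite A")
  case True
  then show ?thesis
    using assms(2) by induction (use assms(1) in \<open>simp_all add: is_ideal_def\<close>)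
qed (use assms(1) in \<open>simp add: is_ideal_def\<close>)

lemma is_ideal_colon: "is_ideal J \<Longrightarrow> is_ideal {g. s * g \<in> J}"
  unfolding is_ideal_def by (metis distrib_left mem_Collect_eq mult.left_commute mult_zero_right)

lemma prime_ideal_prod_memD:
  assumes "is_prime_ideal P" "finite A" "prod f A \<in> P"
  shows "\<exists>a\<in>A. f a \<in> P"
  using assms(2,3)
proof induction
  case empty
  then show ?case using assms(1) by (simp add: is_prime_ideal_def)
next
  case (insert x A)
  then show ?case using assms(1) unfolding is_prime_ideal_def by auto
qed

lemma mu_loc_le_card:
  assumes "s \<notin> P" "finite A" "A \<subseteq> I" "\<And>g. g \<in> I \<Longrightarrow> s * g \<in> gen_ideal A"
  shows "mu_loc I P \<le> card A"
proof -
  obtain gs where gs: "set gs = A" "distinct gs"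
    using finite_distinct_list[OF assms(2)] by blast
  have "mu_loc I P \<le> length gs"
    unfolding mu_loc_def by (rule Least_le) (use gs assms(1,3,4) in blast)
  then show ?thesis
    using distinct_card[OF gs(2)] gs(1) by simp
qed

lemma le_height:
  assumes "\<And>i. i \<le> h \<Longrightarrow> is_prime_ideal (c i)" "\<And>i. i < h \<Longrightarrow> c i \<subset> c (Suc i)"
  shows "enat h \<le> height (c h)"
  unfolding height_def by (rule Sup_upper) (use assms in blast)

section \<open>Forests and trace covers\<close>

definition is_forest :: "'v set set \<Rightarrow> bool" where
  "is_forest Fs \<longleftrightarrow> (\<forall>S. S \<subseteq> Fs \<and> S \<noteq> {} \<longrightarrow> (\<exists>F. is_leaf S F))"

lemma is_tree_imp_is_forest: "is_tree Fs \<Longrightarrow> is_forest Fs"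
  unfolding is_tree_def is_forest_def by blast

lemma is_forest_subset: "is_forest Fs \<Longrightarrow> S \<subseteq> Fs \<Longrightarrow> is_forest S"
  unfolding is_forest_def by blast

text \<open>Once the variables outside \<open>W\<close> are inverted, this says that the monomial of every facet in
  \<open>S\<close> is a multiple of the monomial of some facet in \<open>T\<close>.\<close>
definition covers_traces :: "'v set \<Rightarrow> 'v set set \<Rightarrow> 'v set set \<Rightarrow> bool" where
  "covers_traces W T S \<longleftrightarrow> (\<forall>G\<in>S. \<exists>F\<in>T. F \<inter> W \<subseteq> G)"

lemma covers_traces_remove_dominated:
  assumes "covers_traces W T (S - {G})" "F \<in> S" "F \<noteq> G" "F \<inter> W \<subseteq> G"
  shows "covers_traces W T S"
proof -
  obtain F0 where "F0 \<in> T" "F0 \<inter> W \<subseteq> F"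
    using assms(1-3) unfolding covers_traces_def by blast
  then have "F0 \<inter> W \<subseteq> G"
    using assms(4) by blast
  then show ?thesis
    using assms(1) \<open>F0 \<in> T\<close> unfolding covers_traces_def by blast
qed

lemma covers_traces_insert_private:
  assumes "covers_traces (W - {w}) T (S - {F})" "\<forall>F'\<in>T. w \<notin> F'"
  shows "covers_traces W (insert F T) S"
  unfolding covers_traces_def
proof
  fix G assume "G \<in> S"
  show "\<exists>F'\<in>insert F T. F' \<inter> W \<subseteq> G"
  proof (cases "G = F")
    case False
    then obtain F' where "F' \<in> T" "F' \<inter> (W - {w}) \<subseteq> G"
      using assms(1) \<open>G \<in> S\<close> unfolding covers_traces_def by blast
    then show ?thesis
      using assms(2) by blast
  qed blast
qed

lemma is_leaf_trace_cases [consumes 2]: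
  assumes "is_leaf S F" "F \<inter> W \<noteq> {}"
  obtains (dominated) G where "G \<in> S" "G \<noteq> F" "F \<inter> W \<subseteq> G"
    | (private_vertex) w where "w \<in> F" "w \<in> W" "\<forall>F'\<in>S - {F}. w \<notin> F'"
proof -
  consider "S = {F}" | G where "G \<in> S" "G \<noteq> F" "\<forall>F'\<in>S. F' \<noteq> F \<longrightarrow> F \<inter> F' \<subseteq> F \<inter> G"
    using assms(1) unfolding is_leaf_def by blast
  then show thesis
  proof cases
    case 1
    then show thesis
      using that(2) assms(2) by blast
  next
    case (2 G)
    show thesis
    proof (cases "F \<inter> W \<subseteq> G")
      case True
      then show thesis
        using that(1) 2(1,2) by blast
    next
      case False
      then obtain w where w: "w \<in> F" "w \<in> W" "w \<notin> G"
        by blast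
      have "\<forall>F'\<in>S - {F}. w \<notin> F'"
        using 2(3) w by blast
      with w(1,2) show thesis
        by (rule that(2))
    qed
  qed
qed

lemma card_insert_le_card_Diff1:
  assumes "finite T" "finite W" "w \<in> W" "card T \<le> card (W - {w})"
  shows "card (insert F T) \<le> card W"
proof -
  have "card (insert F T) \<le> Suc (card (W - {w}))"
    using assms(1,4) by (simp add: card_insert_if)
  also have "\<dots> = card W"
    using assms(2,3) by (rule card_Suc_Diff1)
  finally show ?thesis .
qed

text \<open>A leaf whose trace lies inside another facet \<open>G\<close> makes \<open>G\<close> redundant; otherwise the leaf
  owns a vertex of \<open>W\<close> lying in no other facet, which pays for keeping the leaf.\<close>
lemma forest_small_trace_cover:
  assumes "is_forest S" "finite S" "finite W" "\<forall>F\<in>S. F \<inter> W \<noteq> {}"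
  shows "\<exists>T\<subseteq>S. card T \<le> card W \<and> covers_traces W T S"
  using assms(2,1,3,4)
proof (induction S arbitrary: W rule: finite_psubset_induct)
  case (psubset S)
  have IH: "\<exists>T\<subseteq>S - {X}. card T \<le> card W' \<and> covers_traces W' T (S - {X})"
    if "X \<in> S" "finite W'" "\<forall>F\<in>S - {X}. F \<inter> W' \<noteq> {}" for X W'
  proof (rule psubset.IH)
    show "S - {X} \<subset> S"
      using that(1) by blast
    show "is_forest (S - {X})"
      using psubset.prems(1) by (rule is_forest_subset) blast
  qed (use that(2,3) in auto)
  show ?case
  proof (cases "S = {}")
    case True
    then show ?thesis
      by (simp add: covers_traces_def)
  next
    case False
    then obtain F where leaf: "is_leaf S F"
      using psubset.prems(1) unfolding is_forest_def by blast
    then have "F \<in> S"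
      unfolding is_leaf_def by blast
    then have "F \<inter> W \<noteq> {}"
      using psubset.prems(3) by blast
    with leaf show ?thesis
    proof (cases rule: is_leaf_trace_cases)
      case (dominated G)
      have "\<exists>T\<subseteq>S - {G}. card T \<le> card W \<and> covers_traces W T (S - {G})"
        by (rule IH) (use dominated(1) psubset.prems(2,3) in blast)+
      then obtain T where "T \<subseteq> S - {G}" "card T \<le> card W" "covers_traces W T (S - {G})"
        by blast
      moreover from this(3) have "covers_traces W T S"
        by (rule covers_traces_remove_dominated) (use \<open>F \<in> S\<close> dominated in auto)
      ultimately show ?thesis
        by blast
    next
      case (private_vertex w)
      have "\<exists>T\<subseteq>S - {F}. card T \<le> card (W - {w}) \<and> covers_traces (W - {w}) T (S - {F})"
      proof (rule IH)
        show "finite (W - {w})"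
          using psubset.prems(2) by simp
        show "\<forall>F'\<in>S - {F}. F' \<inter> (W - {w}) \<noteq> {}"
          using psubset.prems(3) private_vertex(3) by blast
      qed (rule \<open>F \<in> S\<close>)
      then obtain T where T: "T \<subseteq> S - {F}" "card T \<le> card (W - {w})"
        "covers_traces (W - {w}) T (S - {F})"
        by blast
      have "finite T"
        using T(1) psubset.hyps(1) finite_subset by blast
      then have "card (insert F T) \<le> card W"
        using psubset.prems(2) private_vertex(2) T(2) by (rule card_insert_le_card_Diff1)
      moreover have "covers_traces W (insert F T) S"
        by (rule covers_traces_insert_private[OF T(3)]) (use T(1) private_vertex(3) in blast)
      ultimately show ?thesis
        using T(1) \<open>F \<in> S\<close> by blast
    qed
  qed
qed

section \<open>Primes generated by variables\<close>

lemma exists_additive_embedding: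
  "\<exists>\<tau> :: ('v::countable \<Rightarrow>\<^sub>0 nat) \<Rightarrow> (nat \<Rightarrow>\<^sub>0 nat). inj \<tau> \<and> (\<forall>x y. \<tau> (x + y) = \<tau> x + \<tau> y)"
proof -
  define \<tau> :: "('v \<Rightarrow>\<^sub>0 nat) \<Rightarrow> (nat \<Rightarrow>\<^sub>0 nat)" where
    "\<tau> m = Abs_poly_mapping (\<lambda>n. Poly_Mapping.lookup m (from_nat n) when n \<in> range (to_nat :: 'v \<Rightarrow> nat))" for m
  have lookup_\<tau>: "Poly_Mapping.lookup (\<tau> m) n = (Poly_Mapping.lookup m (from_nat n) when n \<in> range (to_nat :: 'v \<Rightarrow> nat))"
    for m n
  proof -
    have "{n. (Poly_Mapping.lookup m (from_nat n) when n \<in> range (to_nat :: 'v \<Rightarrow> nat)) \<noteq> 0}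
        \<subseteq> to_nat ` Poly_Mapping.keys m"
      by (auto simp: when_def in_keys_iff)
    then have "finite {n. (Poly_Mapping.lookup m (from_nat n) when n \<in> range (to_nat :: 'v \<Rightarrow> nat)) \<noteq> 0}"
      by (rule finite_subset) simp
    then show ?thesis
      unfolding \<tau>_def by simp
  qed
  have "inj \<tau>"
  proof (rule injI, rule poly_mapping_eqI)
    fix x y and v :: 'v
    assume "\<tau> x = \<tau> y"
    then have "Poly_Mapping.lookup (\<tau> x) (to_nat v) = Poly_Mapping.lookup (\<tau> y) (to_nat v)"
      by simp
    then show "Poly_Mapping.lookup x v = Poly_Mapping.lookup y v"
      by (simp add: lookup_\<tau>)
  qed
  moreover have "\<tau> (x + y) = \<tau> x + \<tau> y" for x y
    by (rule poly_mapping_eqI) (simp add: lookup_\<tau> lookup_add when_def)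
  ultimately show ?thesis
    by blast
qed

lemma lookup_mult_unique_decomposition:
  fixes a b :: "'m::monoid_add \<Rightarrow>\<^sub>0 'k::semiring_0"
  assumes "\<And>l r. l \<in> Poly_Mapping.keys a \<Longrightarrow> r \<in> Poly_Mapping.keys b \<Longrightarrow> l + r = l0 + r0
      \<Longrightarrow> l = l0 \<and> r = r0"
  shows "Poly_Mapping.lookup (a * b) (l0 + r0) = Poly_Mapping.lookup a l0 * Poly_Mapping.lookup b r0"
proof -
  have "Poly_Mapping.lookup (a * b) (l0 + r0)
      = (\<Sum>(l, r). Poly_Mapping.lookup a l * Poly_Mapping.lookup b r when l0 + r0 = l + r)"
    by (simp add: times_poly_mapping.rep_eq prod_fun_unfold_prod)
  also have "\<dots> = (\<Sum>lr. Poly_Mapping.lookup a l0 * Poly_Mapping.lookup b r0 when lr = (l0, r0))"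
  proof (rule Sum_any.cong)
    fix lr :: "'m \<times> 'm"
    obtain l r where lr: "lr = (l, r)"
      by fastforce
    have "Poly_Mapping.lookup a l = 0 \<or> Poly_Mapping.lookup b r = 0" if "l0 + r0 = l + r" "lr \<noteq> (l0, r0)"
      using assms[of l r] that lr by (auto simp: in_keys_iff)
    then show "(case lr of (l, r) \<Rightarrow> Poly_Mapping.lookup a l * Poly_Mapping.lookup b r when l0 + r0 = l + r)
        = (Poly_Mapping.lookup a l0 * Poly_Mapping.lookup b r0 when lr = (l0, r0))"
      using lr by (auto simp: when_def)
  qed
  also have "\<dots> = Poly_Mapping.lookup a l0 * Poly_Mapping.lookup b r0"
    by simp
  finally show ?thesis .
qed

lemma additive_embedding_max_sum_unique:
  fixes \<tau> :: "'m::cancel_comm_monoid_add \<Rightarrow> 'o::linordered_cancel_ab_semigroup_add"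
  assumes "inj \<tau>" "\<And>x y. \<tau> (x + y) = \<tau> x + \<tau> y"
    and "\<forall>l\<in>A. \<tau> l \<le> \<tau> l0" "\<forall>r\<in>B. \<tau> r \<le> \<tau> r0"
    and "l \<in> A" "r \<in> B" "l + r = l0 + r0"
  shows "l = l0 \<and> r = r0"
proof -
  have le: "\<tau> l \<le> \<tau> l0" "\<tau> r \<le> \<tau> r0"
    using assms(3-6) by auto
  have sum: "\<tau> l + \<tau> r = \<tau> l0 + \<tau> r0"
    using assms(7) by (simp only: assms(2)[symmetric])
  have "\<tau> l = \<tau> l0"
  proof (rule ccontr)
    assume "\<tau> l \<noteq> \<tau> l0"
    then have "\<tau> l + \<tau> r < \<tau> l0 + \<tau> r0"
      using le by (intro add_less_le_mono) auto
    then show False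
      using sum by simp
  qed
  then have "l = l0"
    using assms(1) by (simp add: inj_eq)
  then show ?thesis
    using assms(7) by simp
qed

text \<open>The monomials avoiding \<open>S\<close> are closed under sums and under summands; ordering them
  through an additive embedding into the ordered monoid \<open>nat \<Rightarrow>\<^sub>0 nat\<close>, the sum of the largest
  such monomials of \<open>a\<close> and of \<open>b\<close> arises in only one way.\<close>
lemma keys_mult_avoiding:
  fixes a b :: "('v::countable, 'k::semiring_no_zero_divisors) mpoly"
  assumes "m1 \<in> Poly_Mapping.keys a" "\<forall>v\<in>S. Poly_Mapping.lookup m1 v = 0"
    and "m2 \<in> Poly_Mapping.keys b" "\<forall>v\<in>S. Poly_Mapping.lookup m2 v = 0"
  shows "\<exists>m\<in>Poly_Mapping.keys (a * b). \<forall>v\<in>S. Poly_Mapping.lookup m v = 0"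
proof -
  obtain \<tau> :: "('v \<Rightarrow>\<^sub>0 nat) \<Rightarrow> (nat \<Rightarrow>\<^sub>0 nat)" where \<tau>: "inj \<tau>" "\<And>x y. \<tau> (x + y) = \<tau> x + \<tau> y"
    using exists_additive_embedding by blast
  define avoids where "avoids m \<longleftrightarrow> (\<forall>v\<in>S. Poly_Mapping.lookup m v = 0)" for m :: "'v \<Rightarrow>\<^sub>0 nat"
  have avoids_add: "avoids (l + r) \<longleftrightarrow> avoids l \<and> avoids r" for l r
    unfolding avoids_def by (auto simp: lookup_add)
  define A where "A = {m \<in> Poly_Mapping.keys a. avoids m}"
  define B where "B = {m \<in> Poly_Mapping.keys b. avoids m}"
  have "finite (\<tau> ` A)" "\<tau> ` A \<noteq> {}" "finite (\<tau> ` B)" "\<tau> ` B \<noteq> {}"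
    using assms unfolding A_def B_def avoids_def by auto
  then obtain l0 r0 where "l0 \<in> A" "\<tau> l0 = Max (\<tau> ` A)" "r0 \<in> B" "\<tau> r0 = Max (\<tau> ` B)"
    using Max_in[of "\<tau> ` A"] Max_in[of "\<tau> ` B"] by (fastforce simp del: Max_in)
  then have l0: "l0 \<in> A" "\<forall>l\<in>A. \<tau> l \<le> \<tau> l0" and r0: "r0 \<in> B" "\<forall>r\<in>B. \<tau> r \<le> \<tau> r0"
    using \<open>finite (\<tau> ` A)\<close> \<open>finite (\<tau> ` B)\<close> by auto
  have "l = l0 \<and> r = r0"
    if "l \<in> Poly_Mapping.keys a" "r \<in> Poly_Mapping.keys b" "l + r = l0 + r0" for l r
  proof (rule additive_embedding_max_sum_unique[OF \<tau> l0(2) r0(2) _ _ that(3)])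
    have "avoids (l + r)"
      using that(3) l0(1) r0(1) avoids_add unfolding A_def B_def by simp
    then show "l \<in> A" "r \<in> B"
      using that(1,2) avoids_add unfolding A_def B_def by simp_all
  qed
  then have "Poly_Mapping.lookup (a * b) (l0 + r0) = Poly_Mapping.lookup a l0 * Poly_Mapping.lookup b r0"
    by (rule lookup_mult_unique_decomposition)
  also have "\<dots> \<noteq> 0"
    using l0(1) r0(1) unfolding A_def B_def by (simp add: in_keys_iff)
  finally have "l0 + r0 \<in> Poly_Mapping.keys (a * b)"
    by (simp add: in_keys_iff)
  moreover have "avoids (l0 + r0)"
    using l0(1) r0(1) avoids_add unfolding A_def B_def by blast
  ultimately show ?thesis
    unfolding avoids_def by blast
qed

definition var_ideal :: "'v set \<Rightarrow> ('v, 'k::comm_ring_1) mpoly set" where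
  "var_ideal S = {f. \<forall>m\<in>Poly_Mapping.keys f. \<exists>v\<in>S. Poly_Mapping.lookup m v \<noteq> 0}"

lemma keys_var: "Poly_Mapping.keys (var v :: ('v, 'k::comm_ring_1) mpoly) = {Poly_Mapping.single v 1}"
  unfolding var_def by simp

lemma var_mem_var_ideal_iff: "var v \<in> var_ideal S \<longleftrightarrow> v \<in> S"
  unfolding var_ideal_def by (simp add: keys_var lookup_single when_def)

lemma var_ideal_mono: "S \<subseteq> S' \<Longrightarrow> var_ideal S \<subseteq> var_ideal S'"
  unfolding var_ideal_def by blast

lemma var_ideal_psubset_insert: "v \<notin> S \<Longrightarrow> var_ideal S \<subset> var_ideal (insert v S)"
  using var_ideal_mono[of S "insert v S"] var_mem_var_ideal_iff[of v S]
    var_mem_var_ideal_iff[of v "insert v S"] by blast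

lemma is_ideal_var_ideal: "is_ideal (var_ideal S :: ('v, 'k::comm_ring_1) mpoly set)"
  unfolding is_ideal_def
proof (intro conjI ballI allI)
  show "0 \<in> var_ideal S"
    unfolding var_ideal_def by simp
next
  fix x y :: "('v, 'k) mpoly"
  assume "x \<in> var_ideal S" "y \<in> var_ideal S"
  then show "x + y \<in> var_ideal S"
    using keys_add[of x y] unfolding var_ideal_def by blast
next
  fix r x :: "('v, 'k) mpoly"
  assume x: "x \<in> var_ideal S"
  show "r * x \<in> var_ideal S"
    unfolding var_ideal_def
  proof (intro CollectI ballI)
    fix m assume "m \<in> Poly_Mapping.keys (r * x)"
    then obtain a b where "m = a + b" "b \<in> Poly_Mapping.keys x"
      using keys_mult[of r x] by blast
    moreover have "\<exists>v\<in>S. Poly_Mapping.lookup b v \<noteq> 0"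
      using x \<open>b \<in> Poly_Mapping.keys x\<close> by (simp add: var_ideal_def)
    ultimately show "\<exists>v\<in>S. Poly_Mapping.lookup m v \<noteq> 0"
      by (auto simp: lookup_add)
  qed
qed

lemma single_eq_mult_var:
  assumes "Poly_Mapping.lookup m v \<noteq> 0"
  shows "Poly_Mapping.single m c = Poly_Mapping.single (m - Poly_Mapping.single v 1) c * var v"
proof -
  have "m = (m - Poly_Mapping.single v 1) + Poly_Mapping.single v 1"
    by (rule poly_mapping_eqI) (use assms in \<open>auto simp: lookup_add lookup_minus lookup_single when_def\<close>)
  then show ?thesis
    unfolding var_def mult_single by simp
qed

lemma sum_single_lookup:
  "(\<Sum>m\<in>Poly_Mapping.keys f. Poly_Mapping.single m (Poly_Mapping.lookup f m)) = f"
proof (rule poly_mapping_eqI)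
  fix k
  have "Poly_Mapping.lookup (\<Sum>m\<in>Poly_Mapping.keys f. Poly_Mapping.single m (Poly_Mapping.lookup f m)) k
      = (\<Sum>m\<in>Poly_Mapping.keys f. Poly_Mapping.lookup f m when m = k)"
    by (simp add: lookup_sum lookup_single)
  also have "\<dots> = Poly_Mapping.lookup f k"
    by (cases "k \<in> Poly_Mapping.keys f") (simp_all add: when_def in_keys_iff)
  finally show "Poly_Mapping.lookup (\<Sum>m\<in>Poly_Mapping.keys f. Poly_Mapping.single m (Poly_Mapping.lookup f m)) k
      = Poly_Mapping.lookup f k" .
qed

lemma var_ideal_eq_gen_ideal: "var_ideal S = gen_ideal (var ` S)"
proof
  show "gen_ideal (var ` S) \<subseteq> var_ideal S"
    by (rule gen_ideal_least) (auto simp: is_ideal_var_ideal var_mem_var_ideal_iff)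
next
  show "var_ideal S \<subseteq> gen_ideal (var ` S)"
  proof
    fix f assume f: "f \<in> var_ideal S"
    have "Poly_Mapping.single m (Poly_Mapping.lookup f m) \<in> gen_ideal (var ` S)"
      if "m \<in> Poly_Mapping.keys f" for m
    proof -
      have "\<exists>v\<in>S. Poly_Mapping.lookup m v \<noteq> 0"
        using f that by (simp add: var_ideal_def)
      then obtain v where "v \<in> S" "Poly_Mapping.lookup m v \<noteq> 0"
        by blast
      then have "Poly_Mapping.single m (Poly_Mapping.lookup f m)
          = Poly_Mapping.single (m - Poly_Mapping.single v 1) (Poly_Mapping.lookup f m) * var v"
        by (intro single_eq_mult_var)
      moreover have "var v \<in> gen_ideal (var ` S)"
        using \<open>v \<in> S\<close> gen_ideal_superset by blast
      ultimately show ?thesis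
        using ideal_mult_mem[OF is_ideal_gen_ideal] by simp
    qed
    then have "(\<Sum>m\<in>Poly_Mapping.keys f. Poly_Mapping.single m (Poly_Mapping.lookup f m))
        \<in> gen_ideal (var ` S)"
      by (intro ideal_sum_mem[OF is_ideal_gen_ideal])
    then show "f \<in> gen_ideal (var ` S)"
      by (simp only: sum_single_lookup)
  qed
qed

lemma var_ideal_prime: "is_prime_ideal (var_ideal S :: ('v::countable, 'k::idom) mpoly set)"
  unfolding is_prime_ideal_def
proof (intro conjI allI impI is_ideal_var_ideal)
  show "1 \<notin> var_ideal S"
    unfolding var_ideal_def by simp
next
  fix a b :: "('v, 'k) mpoly"
  assume ab: "a * b \<in> var_ideal S"
  show "a \<in> var_ideal S \<or> b \<in> var_ideal S"
  proof (rule ccontr)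
    assume "\<not> (a \<in> var_ideal S \<or> b \<in> var_ideal S)"
    then obtain m1 m2 where "m1 \<in> Poly_Mapping.keys a" "\<forall>v\<in>S. Poly_Mapping.lookup m1 v = 0"
      "m2 \<in> Poly_Mapping.keys b" "\<forall>v\<in>S. Poly_Mapping.lookup m2 v = 0"
      unfolding var_ideal_def by auto
    then obtain m where "m \<in> Poly_Mapping.keys (a * b)" "\<forall>v\<in>S. Poly_Mapping.lookup m v = 0"
      using keys_mult_avoiding by blast
    with ab show False
      unfolding var_ideal_def by fastforce
  qed
qed

lemma card_le_height:
  fixes P :: "('v::countable, 'k::idom) mpoly set"
  assumes "is_prime_ideal P" "finite W" "var ` W \<subseteq> P"
  shows "enat (card W) \<le> height P"
proof -
  obtain ws where ws: "set ws = W" "distinct ws"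
    using finite_distinct_list[OF assms(2)] by blast
  define h where "h = length ws"
  define c where "c i = (if i < h then var_ideal (set (take i ws)) else P)" for i
  have "var_ideal (set ws) \<subseteq> P"
    unfolding var_ideal_eq_gen_ideal ws(1)
    by (rule gen_ideal_least) (use assms(1,3) in \<open>simp_all add: is_prime_ideal_def\<close>)
  then have below: "var_ideal (set (take i ws)) \<subseteq> c i" if "i \<le> h" for i
    using that unfolding c_def h_def by auto
  have "c i \<subset> c (Suc i)" if "i < h" for i
  proof -
    have "distinct (take (Suc i) ws)"
      using ws(2) by simp
    then have "ws ! i \<notin> set (take i ws)"
      using that unfolding h_def by (simp add: take_Suc_conv_app_nth)
    then have "c i \<subset> var_ideal (insert (ws ! i) (set (take i ws)))"
      using that unfolding c_def by (simp add: var_ideal_psubset_insert)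
    also have "\<dots> \<subseteq> c (Suc i)"
      using below[of "Suc i"] that unfolding h_def by (simp add: take_Suc_conv_app_nth)
    finally show ?thesis .
  qed
  moreover have "is_prime_ideal (c i)" if "i \<le> h" for i
    unfolding c_def using assms(1) by (simp add: var_ideal_prime)
  ultimately have "enat h \<le> height (c h)"
    by (intro le_height)
  moreover have "c h = P" "h = card W"
    using distinct_card[OF ws(2)] unfolding c_def h_def ws(1) by simp_all
  ultimately show ?thesis
    by simp
qed

section \<open>The facet ideal at a prime\<close>

lemma prod_dvd_prod_compl_mult:
  fixes f :: "'v::finite \<Rightarrow> 'a::comm_monoid_mult"
  assumes "F \<inter> W \<subseteq> G"
  shows "prod f F dvd prod f (- W) * prod f G"
proof -
  have "prod f F = prod f (F - W) * prod f (F \<inter> W)"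
    by (metis Int_commute mult.commute finite prod.Int_Diff)
  also have "\<dots> dvd prod f (- W) * prod f G"
    by (intro mult_dvd_mono prod_dvd_prod_subset) (use assms in auto)
  finally show ?thesis .
qed

lemma facet_monomial_mem_facet_ideal:
  assumes "F \<in> Fs"
  shows "(\<Prod>v\<in>F. var v) \<in> (facet_ideal Fs :: ('v, 'k::comm_ring_1) mpoly set)"
  unfolding facet_ideal_def using gen_ideal_superset imageI[OF assms] by (rule subsetD)

lemma facet_meets_prime_vars:
  fixes P :: "('v::finite, 'k::comm_ring_1) mpoly set"
  assumes "is_prime_ideal P" "facet_ideal Fs \<subseteq> P" "F \<in> Fs"
  shows "F \<inter> {v. var v \<in> P} \<noteq> {}"
proof -
  have "(\<Prod>v\<in>F. var v) \<in> P"
    using assms(2) facet_monomial_mem_facet_ideal[OF assms(3)] by (rule subsetD)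
  then obtain v where "v \<in> F" "var v \<in> P"
    using prime_ideal_prod_memD[OF assms(1) finite] by blast
  then show ?thesis
    by blast
qed

lemma prod_non_prime_vars_not_mem:
  fixes P :: "('v::finite, 'k::comm_ring_1) mpoly set"
  assumes "is_prime_ideal P"
  shows "(\<Prod>v\<in>-{v. var v \<in> P}. var v) \<notin> P"
proof
  assume "(\<Prod>v\<in>-{v. var v \<in> P}. var v) \<in> P"
  then obtain v where "v \<in> -{v. var v \<in> P}" "var v \<in> P"
    using prime_ideal_prod_memD[OF assms finite] by blast
  then show False
    by simp
qed

lemma compl_vars_mult_mem_gen_ideal:
  fixes Fs T :: "'v::finite set set"
  assumes "covers_traces W T Fs" "g \<in> facet_ideal Fs"
  shows "(\<Prod>v\<in>-W. var v) * g \<in> gen_ideal ((\<lambda>F. \<Prod>v\<in>F. var v :: ('v, 'k::comm_ring_1) mpoly) ` T)"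
proof -
  define s where "s = (\<Prod>v\<in>-W. var v :: ('v, 'k) mpoly)"
  define J where "J = gen_ideal ((\<lambda>F. \<Prod>v\<in>F. var v :: ('v, 'k) mpoly) ` T)"
  have J: "is_ideal J"
    unfolding J_def by (rule is_ideal_gen_ideal)
  have "s * (\<Prod>v\<in>G. var v) \<in> J" if "G \<in> Fs" for G
  proof -
    have "\<exists>F\<in>T. F \<inter> W \<subseteq> G"
      using assms(1) that unfolding covers_traces_def by (rule bspec)
    then obtain F where "F \<in> T" "F \<inter> W \<subseteq> G" ..
    have "(\<Prod>v\<in>F. var v) \<in> J"
      unfolding J_def using gen_ideal_superset imageI[OF \<open>F \<in> T\<close>] by (rule subsetD)
    moreover have "(\<Prod>v\<in>F. var v) dvd s * (\<Prod>v\<in>G. var v)"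
      unfolding s_def using \<open>F \<inter> W \<subseteq> G\<close> by (rule prod_dvd_prod_compl_mult)
    ultimately show ?thesis
      by (rule ideal_dvd_mem[OF J])
  qed
  then have "(\<lambda>F. \<Prod>v\<in>F. var v) ` Fs \<subseteq> {g. s * g \<in> J}"
    by (intro image_subsetI CollectI)
  then have "facet_ideal Fs \<subseteq> {g. s * g \<in> J}"
    unfolding facet_ideal_def by (rule gen_ideal_least[OF is_ideal_colon[OF J]])
  then have "s * g \<in> J"
    using assms(2) by blast
  then show ?thesis
    unfolding s_def J_def .
qed

lemma mu_loc_facet_ideal_le_card:
  fixes Fs T :: "'v::finite set set" and P :: "('v, 'k::comm_ring_1) mpoly set"
  assumes "(\<Prod>v\<in>-W. var v) \<notin> P" "T \<subseteq> Fs" "covers_traces W T Fs"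
  shows "mu_loc (facet_ideal Fs) P \<le> card T"
proof -
  let ?gens = "(\<lambda>F. \<Prod>v\<in>F. var v :: ('v, 'k) mpoly) ` T"
  have "mu_loc (facet_ideal Fs) P \<le> card ?gens"
  proof (rule mu_loc_le_card[OF assms(1)])
    show "finite ?gens"
      by simp
    show "?gens \<subseteq> facet_ideal Fs"
      using assms(2) facet_monomial_mem_facet_ideal by blast
    show "(\<Prod>v\<in>-W. var v) * g \<in> gen_ideal ?gens" if "g \<in> facet_ideal Fs" for g
      using assms(3) that by (rule compl_vars_mult_mem_gen_ideal)
  qed
  also have "\<dots> \<le> card T"
    using card_image_le[OF finite] .
  finally show ?thesis .
qed

theorem mainTheorem8:
  fixes Fs :: "'v::finite set set"
    and P :: "('v, 'k::field) mpoly set"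
  assumes "is_facet_set Fs"
    and "is_tree Fs"
    and "is_prime_ideal P"
    and "P \<subseteq> max_ideal"
    and "(facet_ideal Fs :: ('v, 'k) mpoly set) \<subseteq> P"
  shows "enat (mu_loc (facet_ideal Fs :: ('v, 'k) mpoly set) P) \<le> height P"
proof -
  define W where "W = {v. (var v :: ('v, 'k) mpoly) \<in> P}"
  have "is_forest Fs" "finite Fs" "finite W"
    using is_tree_imp_is_forest[OF assms(2)] assms(1) by (simp_all add: is_facet_set_def)
  moreover have "\<forall>F\<in>Fs. F \<inter> W \<noteq> {}"
    unfolding W_def using facet_meets_prime_vars[OF assms(3,5)] by blast
  ultimately have "\<exists>T\<subseteq>Fs. card T \<le> card W \<and> covers_traces W T Fs"
    by (intro forest_small_trace_cover)
  then obtain T where T: "T \<subseteq> Fs" "card T \<le> card W" "covers_traces W T Fs"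
    by blast
  have "(\<Prod>v\<in>-W. var v) \<notin> P"
    unfolding W_def by (rule prod_non_prime_vars_not_mem[OF assms(3)])
  then have "mu_loc (facet_ideal Fs) P \<le> card T"
    using T(1,3) by (rule mu_loc_facet_ideal_le_card)
  then have "enat (mu_loc (facet_ideal Fs) P) \<le> enat (card W)"
    using T(2) by simp
  also have "\<dots> \<le> height P"
    by (rule card_le_height[OF assms(3)]) (auto simp: W_def)
  finally show ?thesis .
qed

end
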